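(* Let $T$ be an $spo$-tableau and $x_1\in B_1$ such that the new box of $U=x_1\rightarrow T$ lies in row 1. If $x_2\in B_0$ and the insertion of $x_2$ into $U$ causes a cancellation, then the first rows of $U\leftarrow x_2$ and of $U$ have the same number of boxes.
   Context: Fix positive integers $m,n$. Let $B_0=\{1,\bar1,2,\bar2,\dots,m,\bar m\}$, $B_1=\{1^\circ,\dots,n^\circ\}$, $B=B_0\cup B_1$, totally ordered by $1<\bar1<2<\bar2<\cdots<m<\bar m<1^\circ<\cdots<n^\circ$. Rows are numbered from the top starting at 1, columns from the left. An $spo$-tableau of shape $\lambda$ is a filling of the Young diagram of $\lambda$ with entries of $B$ such that (i) the boxes containing entries of $B_0$ form a Young diagram $\sigma\subseteq\lambda$, and this part is weakly increasing along rows, strictly increasing down columns, and every entry in row $i$ is $\ge i$; (ii) the entries of $B_1$ (filling $\lambda/\sigma$) are strictly increasing along rows and weakly increasing down columns. $spo$-insertion: a forward jeu de taquin slide on an empty box with right neighbour $a$ and lower neighbour $b$ moves $a$ left into the empty box if $a<b$ or ($a=b\in B_1$), and moves $b$ up into the empty box if $b<a$ or ($a=b\in B_0$); if only one neighbour exists it moves in; slides are repeated until the empty box has no right or lower neighbour, and then that box is deleted. Inserting $z\in B_0$ into row $r$: if no entry of the row exceeds $z$, append $z$ in a new box at the end of the row; otherwise let $w$ be the least entry of the row with $w>z$; if $z=r$ (unbarred) and $w=\bar r$, delete $\bar r$ leaving an empty box (a cancellation); otherwise replace $w$ by $z$, displacing $w$. Inserting $z\in B_1$ into column $c$: if no entry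 of the column exceeds $z$, append $z$ in a new box at the bottom; otherwise replace the least entry $w>z$ of the column by $z$, displacing $w$. To insert $x\in B_0$ into $T$ (result $T\leftarrow x$) start by inserting $x$ into row 1; to insert $x\in B_1$ (result $x\rightarrow T$) start by inserting $x$ into column 1. Whenever an entry $w$ is displaced from a box in row $r$, column $c$: if $w\in B_0$ insert it into row $r+1$; if $w\in B_1$ insert it into column $c+1$. The process ends when an entry is placed in a new box, or when a cancellation occurs, in which case the empty box is moved to an outer corner by forward slides and deleted. If no cancellation occurs the result has exactly one new box; if a cancellation occurs the result has exactly one box fewer. *)

theory Defs
  imports Main
begin

text \<open>Ent i is the unbarred letter i, Bar i is the barred letter, Circ j is j-circle.\<close>
datatype entry = Ent nat | Bar nat | Circ nat

fun rk :: "entry \<Rightarrow> nat" where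
  "rk (Ent i) = 2 * i"
| "rk (Bar i) = 2 * i + 1"
| "rk (Circ j) = j"

fun isB0 :: "entry \<Rightarrow> bool" where
  "isB0 (Circ _) = False"
| "isB0 _ = True"

instantiation entry :: linorder
begin
definition less_eq_entry :: "entry \<Rightarrow> entry \<Rightarrow> bool" where
  "less_eq_entry a b = (if isB0 a = isB0 b then rk a \<le> rk b else isB0 a)"
definition less_entry :: "entry \<Rightarrow> entry \<Rightarrow> bool" where
  "less_entry a b = (a \<le> b \<and> \<not> b \<le> a)"
instance
proof
  fix x y z :: entry
  show "(x < y) = (x \<le> y \<and> \<not> y \<le> x)" by (simp add: less_entry_def)
  show "x \<le> x" by (simp add: less_eq_entry_def)
  show "x \<le> y \<Longrightarrow> y \<le> z \<Longrightarrow> x \<le> z"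
    by (cases x; cases y; cases z; auto simp: less_eq_entry_def split: if_splits)
  show "x \<le> y \<Longrightarrow> y \<le> x \<Longrightarrow> x = y"
    by (cases x; cases y; auto simp: less_eq_entry_def split: if_splits; presburger)
  show "x \<le> y \<or> y \<le> x"
    by (cases x; cases y; auto simp: less_eq_entry_def)
qed
end

definition inB0 :: "nat \<Rightarrow> entry \<Rightarrow> bool" where
  "inB0 m e = (\<exists>i. 1 \<le> i \<and> i \<le> m \<and> (e = Ent i \<or> e = Bar i))"

definition inB1 :: "nat \<Rightarrow> entry \<Rightarrow> bool" where
  "inB1 n e = (\<exists>j. 1 \<le> j \<and> j \<le> n \<and> e = Circ j)"

section \<open>Tableaux: partial fillings of boxes (row, column), both 1-indexed\<close>

type_synonym tab = "nat \<times> nat \<Rightarrow> entry option"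

definition young :: "(nat \<times> nat) set \<Rightarrow> bool" where
  "young D = (finite D \<and> (\<forall>(i,j)\<in>D. 1 \<le> i \<and> 1 \<le> j \<and>
      (\<forall>i' j'. 1 \<le> i' \<and> i' \<le> i \<and> 1 \<le> j' \<and> j' \<le> j \<longrightarrow> (i',j') \<in> D)))"

definition spo_tableau :: "nat \<Rightarrow> nat \<Rightarrow> tab \<Rightarrow> bool" where
  "spo_tableau m n T = (
     young (dom T) \<and>
     (\<forall>p e. T p = Some e \<longrightarrow> inB0 m e \<or> inB1 n e) \<and>
     young {p. \<exists>e. T p = Some e \<and> isB0 e} \<and>
     \<comment> \<open>B0 part: weakly increasing along rows, strictly down columns, row i entries \<ge> i\<close>
     (\<forall>i j a b. T (i,j) = Some a \<and> T (i,j+1) = Some b \<and> isB0 a \<and> isB0 b \<longrightarrow> a \<le> b) \<and>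
     (\<forall>i j a b. T (i,j) = Some a \<and> T (i+1,j) = Some b \<and> isB0 a \<and> isB0 b \<longrightarrow> a < b) \<and>
     (\<forall>i j a. T (i,j) = Some a \<and> isB0 a \<longrightarrow> Ent i \<le> a) \<and>
     \<comment> \<open>B1 part: strictly increasing along rows, weakly down columns\<close>
     (\<forall>i j a b. T (i,j) = Some a \<and> T (i,j+1) = Some b \<and> \<not> isB0 a \<and> \<not> isB0 b \<longrightarrow> a < b) \<and>
     (\<forall>i j a b. T (i,j) = Some a \<and> T (i+1,j) = Some b \<and> \<not> isB0 a \<and> \<not> isB0 b \<longrightarrow> a \<le> b))"

definition row_len :: "tab \<Rightarrow> nat \<Rightarrow> nat" where
  "row_len T r = card {j. T (r,j) \<noteq> None}"

datatype state =
    RowIns tab entry nat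
  | ColIns tab entry nat
  | Slide tab nat nat        \<comment> \<open>empty box (not in the domain of tab) at (i,j)\<close>
  | Done tab bool            \<comment> \<open>final tableau; flag = a cancellation occurred\<close>

definition displace :: "tab \<Rightarrow> entry \<Rightarrow> nat \<Rightarrow> nat \<Rightarrow> state" where
  "displace T w r c = (if isB0 w then RowIns T w (r+1) else ColIns T w (c+1))"

definition row_pos :: "tab \<Rightarrow> entry \<Rightarrow> nat \<Rightarrow> nat" where
  "row_pos T z r = (LEAST j. \<exists>w. T (r,j) = Some w \<and> z < w \<and>
       (\<forall>j' w'. T (r,j') = Some w' \<and> z < w' \<longrightarrow> w \<le> w'))"

definition col_pos :: "tab \<Rightarrow> entry \<Rightarrow> nat \<Rightarrow> nat" where
  "col_pos T z c = (LEAST i. \<exists>w. T (i,c) = Some w \<and> z < w \<and>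
       (\<forall>i' w'. T (i',c) = Some w' \<and> z < w' \<longrightarrow> w \<le> w'))"

fun step :: "state \<Rightarrow> state" where
  "step (RowIns T z r) =
     (if \<not> (\<exists>j w. T (r,j) = Some w \<and> z < w)
      then Done (T ((r, LEAST j. 1 \<le> j \<and> T (r,j) = None) := Some z)) False
      else (let j = row_pos T z r; w = the (T (r,j)) in
            if z = Ent r \<and> w = Bar r then Slide (T ((r,j) := None)) r j
            else displace (T ((r,j) := Some z)) w r j))"
| "step (ColIns T z c) =
     (if \<not> (\<exists>i w. T (i,c) = Some w \<and> z < w)
      then Done (T ((LEAST i. 1 \<le> i \<and> T (i,c) = None, c) := Some z)) False
      else (let i = col_pos T z c; w = the (T (i,c)) in
            displace (T ((i,c) := Some z)) w i c))"
| "step (Slide T i j) =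
     (case (T (i,j+1), T (i+1,j)) of
        (None, None) \<Rightarrow> Done T True
      | (Some a, None) \<Rightarrow> Slide (T ((i,j) := Some a, (i,j+1) := None)) i (j+1)
      | (None, Some b) \<Rightarrow> Slide (T ((i,j) := Some b, (i+1,j) := None)) (i+1) j
      | (Some a, Some b) \<Rightarrow>
          (if a < b \<or> (a = b \<and> \<not> isB0 a)
           then Slide (T ((i,j) := Some a, (i,j+1) := None)) i (j+1)
           else Slide (T ((i,j) := Some b, (i+1,j) := None)) (i+1) j))"
| "step (Done T c) = Done T c"

definition runs_to :: "state \<Rightarrow> tab \<Rightarrow> bool \<Rightarrow> bool" where
  "runs_to s U c = (\<exists>k. (step ^^ k) s = Done U c)"

text \<open>row_insert T x U c:  U = T \<leftarrow> x  (x in B0), c = whether a cancellation occurred.\<close>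
definition row_insert :: "tab \<Rightarrow> entry \<Rightarrow> tab \<Rightarrow> bool \<Rightarrow> bool" where
  "row_insert T x U c = runs_to (RowIns T x 1) U c"

text \<open>col_insert T x U c:  U = x \<rightarrow> T  (x in B1).\<close>
definition col_insert :: "tab \<Rightarrow> entry \<Rightarrow> tab \<Rightarrow> bool \<Rightarrow> bool" where
  "col_insert T x U c = runs_to (ColIns T x 1) U c"

end

theory Submission
  imports Defs
begin

text \<open>
  Call \<open>d\<close> a descent of \<open>U\<close> if \<open>U(2,d) < U(1,d+1) \<in> B\<^sub>1\<close>: a hole sliding along row 1
  that reaches column \<open>d\<close> must move down. The bumping path of \<open>x\<^sub>1 \<rightarrow> T\<close> moves right one column
  at a time; following where it meets row 1 shows that, when it ends with a new box in row 1,
  every \<open>Bar 1\<close> of row 1 of \<open>U\<close> is followed within row 1 by a descent.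
  In \<open>U \<leftarrow> x\<^sub>2\<close>, bumping never changes which boxes of row 1 are occupied and a cancellation
  below row 1 does not touch row 1. A cancellation in row 1 deletes a \<open>Bar 1\<close>; the hole then
  slides right until, at the latest at the next descent, it moves down, and the box it leaves in
  row 1 is refilled from row 2. So row 1 keeps exactly its columns.
\<close>

lemma B0_less_B1: "isB0 a \<Longrightarrow> \<not> isB0 b \<Longrightarrow> a < b"
  by (simp add: less_entry_def less_eq_entry_def)

lemma greater_than_B1_is_B1: "\<not> isB0 z \<Longrightarrow> z < w \<Longrightarrow> \<not> isB0 w"
  using B0_less_B1[of w z] by auto

lemma youngD:
  "young D \<Longrightarrow> (i,j) \<in> D \<Longrightarrow> 1 \<le> i' \<Longrightarrow> i' \<le> i \<Longrightarrow> 1 \<le> j' \<Longrightarrow> j' \<le> j \<Longrightarrow> (i',j') \<in> D"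
  unfolding young_def by blast

lemma young_posD: "young D \<Longrightarrow> (i,j) \<in> D \<Longrightarrow> 1 \<le> i \<and> 1 \<le> j"
  unfolding young_def by blast

lemma spo_young_dom: "spo_tableau m n T \<Longrightarrow> young (dom T)"
  by (simp add: spo_tableau_def)

lemma spo_young_B0: "spo_tableau m n T \<Longrightarrow> young {p. \<exists>e. T p = Some e \<and> isB0 e}"
  by (simp add: spo_tableau_def)

lemma spo_col_le_Suc:
  assumes spo: "spo_tableau m n T" and a: "T (i,c) = Some a" and b: "T (i+1,c) = Some b"
  shows "a \<le> b"
proof (cases "isB0 a"; cases "isB0 b")
  assume "isB0 a" "isB0 b"
  then show ?thesis using spo a b unfolding spo_tableau_def by (meson less_imp_le)
next
  assume "isB0 a" "\<not> isB0 b"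
  then show ?thesis using B0_less_B1 less_imp_le by blast
next
  assume "\<not> isB0 a" "isB0 b"
  have "1 \<le> i" "1 \<le> c"
    using young_posD[OF spo_young_dom[OF spo], of i c] a by auto
  then have "(i,c) \<in> {p. \<exists>e. T p = Some e \<and> isB0 e}"
    using youngD[OF spo_young_B0[OF spo], of "i+1" c i c] b \<open>isB0 b\<close> by auto
  with a \<open>\<not> isB0 a\<close> show ?thesis by auto
next
  assume "\<not> isB0 a" "\<not> isB0 b"
  then show ?thesis using spo a b unfolding spo_tableau_def by blast
qed

lemma spo_col_mono:
  assumes spo: "spo_tableau m n T" and "k \<le> k'"
    and "T (k,c) = Some a" and "T (k',c) = Some b"
  shows "a \<le> b"
  using assms(2,4)
proof (induction k' arbitrary: b rule: dec_induct)
  case base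
  then show ?case using assms(3) by simp
next
  case (step k' b)
  have "1 \<le> c" using young_posD[OF spo_young_dom[OF spo], of "Suc k'" c] step.prems by auto
  then obtain b' where b': "T (k',c) = Some b'"
    using youngD[OF spo_young_dom[OF spo], of "Suc k'" c k' c] step.prems step.hyps(1)
      young_posD[OF spo_young_dom[OF spo], of k c] assms(3) by fastforce
  then show ?case
    using step.IH[OF b'] spo_col_le_Suc[OF spo b'] step.prems by fastforce
qed

lemma spo_row_B1_right:
  assumes spo: "spo_tableau m n T" and w: "T (r,c) = Some w" "\<not> isB0 w"
    and "c \<le> c'" and e: "T (r,c') = Some e"
  shows "\<not> isB0 e"
proof
  assume "isB0 e"
  have "1 \<le> r" "1 \<le> c" using young_posD[OF spo_young_dom[OF spo], of r c] w by auto
  then have "(r,c) \<in> {p. \<exists>e. T p = Some e \<and> isB0 e}"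
    using youngD[OF spo_young_B0[OF spo], of r c' r c] e \<open>isB0 e\<close> \<open>c \<le> c'\<close> by auto
  with w show False by auto
qed

lemma least_above_exists:
  fixes f :: "nat \<Rightarrow> 'a::linorder option"
  assumes "finite (ran f)" and "\<exists>k w. f k = Some w \<and> z < w"
  shows "\<exists>w. f (LEAST k. \<exists>w. f k = Some w \<and> z < w \<and> (\<forall>k' w'. f k' = Some w' \<and> z < w' \<longrightarrow> w \<le> w'))
           = Some w \<and> z < w \<and> (\<forall>k' w'. f k' = Some w' \<and> z < w' \<longrightarrow> w \<le> w')"
proof (rule LeastI_ex)
  define S where "S = {w. \<exists>k. f k = Some w \<and> z < w}"
  have "finite S" using assms(1) by (rule finite_subset[rotated]) (auto simp: S_def ran_def)
  moreover have "S \<noteq> {}" using assms(2) by (auto simp: S_def)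
  ultimately have "Min S \<in> S" "\<forall>w\<in>S. Min S \<le> w" by auto
  then show "\<exists>k w. f k = Some w \<and> z < w \<and> (\<forall>k' w'. f k' = Some w' \<and> z < w' \<longrightarrow> w \<le> w')"
    by (auto simp: S_def)
qed

lemma col_pos_spec:
  assumes "finite (dom X)" and "\<exists>i w. X (i,c) = Some w \<and> z < w"
  shows "\<exists>w. X (col_pos X z c, c) = Some w \<and> z < w \<and> (\<forall>i w'. X (i,c) = Some w' \<and> z < w' \<longrightarrow> w \<le> w')"
  unfolding col_pos_def
  using least_above_exists[of "\<lambda>i. X (i,c)" z] assms finite_ran[OF assms(1)]
  by (auto intro: finite_subset[rotated] simp: ran_def)

lemma row_pos_spec:
  assumes "finite (dom X)" and "\<exists>j w. X (r,j) = Some w \<and> z < w"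
  shows "\<exists>w. X (r, row_pos X z r) = Some w \<and> z < w \<and> (\<forall>j w'. X (r,j) = Some w' \<and> z < w' \<longrightarrow> w \<le> w')"
  unfolding row_pos_def
  using least_above_exists[of "\<lambda>j. X (r,j)" z] assms finite_ran[OF assms(1)]
  by (auto intro: finite_subset[rotated] simp: ran_def)

declare step.simps(1-3) [simp del]

lemma step_RowIns_append:
  "\<not> (\<exists>c w. X (r,c) = Some w \<and> z < w) \<Longrightarrow>
    step (RowIns X z r) = Done (X ((r, LEAST c. 1 \<le> c \<and> X (r,c) = None) := Some z)) False"
  by (simp only: step.simps not_False_eq_True if_True)

lemma step_RowIns_bump:
  assumes "\<exists>c w. X (r,c) = Some w \<and> z < w"
  shows "step (RowIns X z r) =
    (let c = row_pos X z r; w = the (X (r,c)) in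
     if z = Ent r \<and> w = Bar r then Slide (X ((r,c) := None)) r c else displace (X ((r,c) := Some z)) w r c)"
  using assms by (simp only: step.simps if_not_P not_not)

lemma step_ColIns_append:
  "\<not> (\<exists>i w. X (i,c) = Some w \<and> z < w) \<Longrightarrow>
    step (ColIns X z c) = Done (X ((LEAST i. 1 \<le> i \<and> X (i,c) = None, c) := Some z)) False"
  by (simp only: step.simps not_False_eq_True if_True)

lemma step_ColIns_bump:
  assumes "\<exists>i w. X (i,c) = Some w \<and> z < w"
  shows "step (ColIns X z c) =
    displace (X ((col_pos X z c, c) := Some z)) (the (X (col_pos X z c, c))) (col_pos X z c) c"
  using assms by (simp only: step.simps if_not_P not_not Let_def)

lemma funpow_invariant: "P x \<Longrightarrow> (\<And>x. P x \<Longrightarrow> P (f x)) \<Longrightarrow> P ((f ^^ k) x)"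
  by (induction k) auto

lemma runs_to_invariant:
  assumes "runs_to s U c" and "P s" and "\<And>s. P s \<Longrightarrow> P (step s)"
  shows "P (Done U c)"
  using assms funpow_invariant[of P s step] unfolding runs_to_def by metis

section \<open>A column insertion ending in row 1\<close>

definition descent_at :: "tab \<Rightarrow> nat \<Rightarrow> bool" where
  "descent_at X d \<longleftrightarrow> (\<exists>a b. X (2,d) = Some b \<and> X (1, Suc d) = Some a \<and> b < a \<and> \<not> isB0 a)"

definition row1_filled :: "tab \<Rightarrow> nat \<Rightarrow> nat \<Rightarrow> bool" where
  "row1_filled X a b \<longleftrightarrow> (\<forall>c. a \<le> c \<and> c \<le> b \<longrightarrow> X (1,c) \<noteq> None)"

definition bar1_before_descent :: "tab \<Rightarrow> bool" where
  "bar1_before_descent X \<longleftrightarrow> (\<forall>j0. X (1,j0) = Some (Bar 1) \<longrightarrow>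
     (\<exists>d \<ge> j0. row1_filled X j0 (Suc d) \<and> descent_at X d))"

definition B1_from :: "tab \<Rightarrow> nat \<Rightarrow> bool" where
  "B1_from X c \<longleftrightarrow> (\<forall>c' e. c \<le> c' \<longrightarrow> X (1,c') = Some e \<longrightarrow> \<not> isB0 e)"

text \<open>If \<open>z\<close> comes to rest in row 1 of column \<open>c\<close>, then \<open>c - 1\<close> becomes a descent.\<close>

definition pending_descent :: "tab \<Rightarrow> tab \<Rightarrow> entry \<Rightarrow> nat \<Rightarrow> bool" where
  "pending_descent T X z c \<longleftrightarrow>
     (\<exists>d. c = Suc d \<and> (d = 0 \<or> (1,d) \<in> dom T \<and> (\<exists>b. X (2,d) = Some b \<and> b < z)))"

text \<open>Here \<open>d = 0\<close> stands for: row 1 contains no letter of \<open>B\<^sub>0\<close> at all.\<close>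

definition descent_then_B1 :: "tab \<Rightarrow> nat \<Rightarrow> bool" where
  "descent_then_B1 X c \<longleftrightarrow> (\<exists>d. Suc d < c \<and> (d = 0 \<or> descent_at X d) \<and> B1_from X (Suc d))"

definition col_path_inv :: "tab \<Rightarrow> tab \<Rightarrow> entry \<Rightarrow> nat \<Rightarrow> bool" where
  "col_path_inv T X z c \<longleftrightarrow> \<not> isB0 z \<and> dom X = dom T \<and> (\<forall>i c'. c \<le> c' \<longrightarrow> X (i,c') = T (i,c'))
     \<and> (pending_descent T X z c \<or> descent_then_B1 X c)"

lemma descent_then_B1_update:
  assumes "descent_then_B1 X c" and "\<not> isB0 z"
  shows "descent_then_B1 (X ((i,c) := Some z)) (Suc c)"
proof -
  obtain d where "Suc d < c" "d = 0 \<or> descent_at X d" "B1_from X (Suc d)"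
    using assms(1) by (auto simp: descent_then_B1_def)
  then show ?thesis using assms(2) unfolding descent_then_B1_def
    by (intro exI[of _ d]) (auto simp: descent_at_def B1_from_def)
qed

lemma pending_descent_in_row1:
  assumes "pending_descent T X z c" and "\<not> isB0 z" and "B1_from X (Suc c)"
  shows "descent_then_B1 (X ((1,c) := Some z)) (Suc c)"
proof -
  obtain d where d: "c = Suc d" "d = 0 \<or> (\<exists>b. X (2,d) = Some b \<and> b < z)"
    using assms(1) by (auto simp: pending_descent_def)
  have "B1_from (X ((1,c) := Some z)) c"
    using assms(2,3) by (force simp: B1_from_def Suc_le_eq nat_less_le)
  then show ?thesis using d assms(2) unfolding descent_then_B1_def
    by (intro exI[of _ d]) (auto simp: descent_at_def)
qed

lemma pending_descent_below_row1:
  assumes spo: "spo_tableau m n T" and inv: "col_path_inv T X z c"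
    and i: "i = col_pos X z c" "2 \<le> i"
    and w: "X (i,c) = Some w" "z < w"
    and w_min: "\<forall>i' w'. X (i',c) = Some w' \<and> z < w' \<longrightarrow> w \<le> w'"
  shows "pending_descent T (X ((i,c) := Some z)) w (Suc c)"
proof -
  have agree: "\<forall>i' c'. c \<le> c' \<longrightarrow> X (i',c') = T (i',c')" using inv by (simp add: col_path_inv_def)
  have Tw: "T (i,c) = Some w" using agree w by auto
  have "1 \<le> c" using young_posD[OF spo_young_dom[OF spo], of i c] Tw by auto
  then have in_T: "(1,c) \<in> dom T" "(2,c) \<in> dom T"
    using youngD[OF spo_young_dom[OF spo], of i c 1 c] youngD[OF spo_young_dom[OF spo], of i c 2 c]
      Tw i(2) by auto
  have "\<exists>b. (X ((i,c) := Some z)) (2,c) = Some b \<and> b < w"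
  proof (cases "i = 2")
    case False
    obtain b where Tb: "T (2,c) = Some b" using in_T by auto
    then have Xb: "X (2,c) = Some b" using agree by auto
    have "b \<noteq> w"
    proof
      assume "b = w"
      then have "i \<le> 2" unfolding i(1) col_pos_def
        using Xb w w_min by (intro Least_le) blast
      with False i(2) show False by simp
    qed
    then show ?thesis using spo_col_mono[OF spo i(2) Tb Tw] Xb False by auto
  qed (use w in auto)
  then show ?thesis using in_T by (auto simp: pending_descent_def)
qed

lemma col_path_inv_step:
  assumes spo: "spo_tableau m n T" and inv: "col_path_inv T X z c"
    and bump: "\<exists>i w. X (i,c) = Some w \<and> z < w"
  obtains w where "step (ColIns X z c) = ColIns (X ((col_pos X z c, c) := Some z)) w (Suc c)"
    and "col_path_inv T (X ((col_pos X z c, c) := Some z)) w (Suc c)"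
proof -
  have zB1: "\<not> isB0 z" and dX: "dom X = dom T"
    and agree: "\<forall>i c'. c \<le> c' \<longrightarrow> X (i,c') = T (i,c')" using inv by (auto simp: col_path_inv_def)
  define i where "i = col_pos X z c"
  obtain w where w: "X (i,c) = Some w" "z < w"
    and w_min: "\<forall>i' w'. X (i',c) = Some w' \<and> z < w' \<longrightarrow> w \<le> w'"
    using col_pos_spec[of X c z] bump dX spo_young_dom[OF spo] unfolding i_def young_def by auto
  have wB1: "\<not> isB0 w" using greater_than_B1_is_B1[OF zB1 w(2)] .
  have Tw: "T (i,c) = Some w" using agree w by auto
  then have "1 \<le> i" using young_posD[OF spo_young_dom[OF spo], of i c] by auto
  let ?X = "X ((i,c) := Some z)"
  have "pending_descent T ?X w (Suc c) \<or> descent_then_B1 ?X (Suc c)"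
  proof (cases "i = 1")
    case True
    have "B1_from X (Suc c)" unfolding B1_from_def
    proof (intro allI impI)
      fix c' e assume "Suc c \<le> c'" "X (1,c') = Some e"
      then show "\<not> isB0 e" using spo_row_B1_right[OF spo Tw wB1, of c' e] agree True by auto
    qed
    then show ?thesis
      using inv zB1 True pending_descent_in_row1 descent_then_B1_update
      by (auto simp: col_path_inv_def)
  next
    case False
    then show ?thesis
      using pending_descent_below_row1[OF spo inv i_def _ w w_min] \<open>1 \<le> i\<close> by simp
  qed
  moreover have "step (ColIns X z c) = ColIns ?X w (Suc c)"
    using step_ColIns_bump[OF bump] w wB1 by (simp add: i_def[symmetric] displace_def)
  moreover have "dom ?X = dom T" using dX Tw by auto
  ultimately show thesis using that wB1 agree unfolding i_def col_path_inv_def by auto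
qed

lemma row1_filled_if_young:
  assumes "young (dom X)" and "(1,k) \<in> dom X" and "1 \<le> a"
  shows "row1_filled X a k"
  unfolding row1_filled_def
proof (intro allI impI)
  fix c assume "a \<le> c \<and> c \<le> k"
  then have "(1,c) \<in> dom X" using youngD[OF assms(1,2), of 1 c] assms(3) by auto
  then show "X (1,c) \<noteq> None" by auto
qed

lemma pending_descent_place:
  assumes yX: "young (dom X)" and dX: "dom X = dom T"
    and pending: "pending_descent T X z c" and zB1: "\<not> isB0 z" and j0: "1 \<le> j0" "j0 < c"
  shows "\<exists>d\<ge>j0. row1_filled (X ((1,c) := Some z)) j0 (Suc d) \<and> descent_at (X ((1,c) := Some z)) d"
proof -
  obtain d b where d: "c = Suc d" "(1,d) \<in> dom X" "X (2,d) = Some b" "b < z"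
    using pending j0 dX by (auto simp: pending_descent_def)
  have "row1_filled X j0 d" using row1_filled_if_young[OF yX d(2) j0(1)] .
  then have "row1_filled (X ((1,c) := Some z)) j0 (Suc d)"
    using d(1) by (auto simp: row1_filled_def le_Suc_eq)
  moreover have "descent_at (X ((1,c) := Some z)) d" using d zB1 by (auto simp: descent_at_def)
  moreover have "j0 \<le> d" using d(1) j0(2) by simp
  ultimately show ?thesis by blast
qed

lemma descent_then_B1_place:
  assumes yX: "young (dom X)" and settled: "descent_then_B1 X c"
    and bar: "X (1,j0) = Some (Bar 1)" and j0: "1 \<le> j0"
  shows "\<exists>d\<ge>j0. row1_filled (X ((1,c) := Some z)) j0 (Suc d) \<and> descent_at (X ((1,c) := Some z)) d"
proof -
  obtain d where d: "Suc d < c" "d = 0 \<or> descent_at X d" "B1_from X (Suc d)"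
    using settled by (auto simp: descent_then_B1_def)
  have "j0 \<le> d"
  proof (rule ccontr)
    assume "\<not> j0 \<le> d"
    with d(3) bar have "\<not> isB0 (Bar 1)" unfolding B1_from_def by (meson not_less_eq_eq)
    then show False by simp
  qed
  then have descent: "descent_at X d" using d(2) j0 by auto
  then have "(1, Suc d) \<in> dom X" by (auto simp: descent_at_def)
  then have "row1_filled (X ((1,c) := Some z)) j0 (Suc d)"
    using row1_filled_if_young[OF yX _ j0] by (auto simp: row1_filled_def)
  moreover have "descent_at (X ((1,c) := Some z)) d" using descent d(1) by (auto simp: descent_at_def)
  ultimately show ?thesis using \<open>j0 \<le> d\<close> by auto
qed

lemma col_path_inv_place:
  assumes spo: "spo_tableau m n T" and Tj: "T (1,j) = None" and inv: "col_path_inv T X z c"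
    and new_box: "dom (X ((l,c) := Some z)) = insert (1,j) (dom T)"
  shows "bar1_before_descent (X ((l,c) := Some z))"
  unfolding bar1_before_descent_def
proof (intro allI impI)
  have yT: "young (dom T)" using spo_young_dom[OF spo] .
  have zB1: "\<not> isB0 z" and dX: "dom X = dom T" using inv by (auto simp: col_path_inv_def)
  have "(l,c) \<notin> dom T"
  proof
    assume "(l,c) \<in> dom T"
    then have "dom (X ((l,c) := Some z)) = dom T" using dX by auto
    then show False using new_box Tj by auto
  qed
  then have lc: "l = 1" "c = j" using new_box dX by auto
  fix j0 assume "(X ((l,c) := Some z)) (1,j0) = Some (Bar 1)"
  then have bar: "X (1,j0) = Some (Bar 1)" using zB1 lc by (auto split: if_splits)
  then have j0_T: "(1,j0) \<in> dom T" using dX by auto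
  have "1 \<le> c" using inv by (auto simp: col_path_inv_def pending_descent_def descent_then_B1_def)
  have j0: "1 \<le> j0" "j0 < c"
  proof -
    show "1 \<le> j0" using young_posD[OF yT j0_T] by simp
    show "j0 < c"
    proof (rule ccontr)
      assume "\<not> j0 < c"
      then have "(1,j) \<in> dom T" using youngD[OF yT j0_T, of 1 j] lc \<open>1 \<le> c\<close> by auto
      with Tj show False by auto
    qed
  qed
  show "\<exists>d\<ge>j0. row1_filled (X ((l,c) := Some z)) j0 (Suc d) \<and> descent_at (X ((l,c) := Some z)) d"
    using inv pending_descent_place[of X T z c j0] descent_then_B1_place[of X c j0 z] yT dX zB1 j0 bar lc
    by (auto simp: col_path_inv_def)
qed

fun col_run_inv :: "tab \<Rightarrow> nat \<Rightarrow> state \<Rightarrow> bool" where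
  "col_run_inv T j (ColIns X z c) \<longleftrightarrow> col_path_inv T X z c"
| "col_run_inv T j (Done X _) \<longleftrightarrow> (dom X = insert (1,j) (dom T) \<longrightarrow> bar1_before_descent X)"
| "col_run_inv T j _ \<longleftrightarrow> False"

lemma col_run_inv_step:
  assumes spo: "spo_tableau m n T" and Tj: "T (1,j) = None" and inv: "col_run_inv T j s"
  shows "col_run_inv T j (step s)"
proof (cases s)
  case (ColIns X z c)
  show ?thesis
  proof (cases "\<exists>i w. X (i,c) = Some w \<and> z < w")
    case True
    obtain w where "step s = ColIns (X ((col_pos X z c, c) := Some z)) w (Suc c)"
      and "col_path_inv T (X ((col_pos X z c, c) := Some z)) w (Suc c)"
      using col_path_inv_step[OF spo _ True] inv ColIns by auto
    then show ?thesis by simp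
  next
    case False
    let ?l = "LEAST i. 1 \<le> i \<and> X (i,c) = None"
    have "step s = Done (X ((?l,c) := Some z)) False" using step_ColIns_append[OF False] ColIns by simp
    then show ?thesis using col_path_inv_place[OF spo Tj, of X z c ?l] inv ColIns by simp
  qed
qed (use inv in simp_all)

lemma col_insert_bar1_before_descent:
  assumes spo: "spo_tableau m n T" and x: "inB1 n x" and ins: "col_insert T x U False"
    and Tj: "T (1,j) = None" and new_box: "dom U = insert (1,j) (dom T)"
  shows "bar1_before_descent U"
proof -
  have "col_path_inv T T x 1"
    using x by (auto simp: col_path_inv_def pending_descent_def inB1_def)
  then have "col_run_inv T j (ColIns T x 1)" by simp
  with ins have "col_run_inv T j (Done U False)"
    unfolding col_insert_def by (rule runs_to_invariant) (rule col_run_inv_step[OF spo Tj])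
  then show ?thesis using new_box by simp
qed

section \<open>A row insertion with a cancellation\<close>

definition row1 :: "tab \<Rightarrow> nat set" where
  "row1 X = {c. X (1,c) \<noteq> None}"

lemma row1_update_Some: "X (r,c) \<noteq> None \<Longrightarrow> row1 (X ((r,c) := Some z)) = row1 X"
  by (auto simp: row1_def)

definition hole_in_row1 :: "tab \<Rightarrow> nat \<Rightarrow> nat set \<Rightarrow> bool" where
  "hole_in_row1 X c R \<longleftrightarrow> c \<in> R \<and> row1 X = R - {c} \<and>
     (\<exists>d \<ge> c. row1_filled X (Suc c) (Suc d) \<and> descent_at X d)"

fun row_run_inv :: "nat set \<Rightarrow> state \<Rightarrow> bool" where
  "row_run_inv R (RowIns X z r) \<longleftrightarrow>
     finite (dom X) \<and> row1 X = R \<and> 1 \<le> r \<and> (r = 1 \<longrightarrow> bar1_before_descent X)"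
| "row_run_inv R (ColIns X z c) \<longleftrightarrow> finite (dom X) \<and> row1 X = R \<and> \<not> isB0 z"
| "row_run_inv R (Slide X i c) \<longleftrightarrow> (2 \<le> i \<and> row1 X = R) \<or> (i = 1 \<and> hole_in_row1 X c R)"
| "row_run_inv R (Done X cancelled) \<longleftrightarrow> (cancelled \<longrightarrow> row1 X = R)"

lemma step_Slide_cases:
  obtains
    "X (i,c+1) = None" "X (i+1,c) = None" "step (Slide X i c) = Done X True"
  | a where "X (i,c+1) = Some a" "\<forall>b. X (i+1,c) = Some b \<longrightarrow> a < b \<or> (a = b \<and> \<not> isB0 a)"
      "step (Slide X i c) = Slide (X ((i,c) := Some a, (i,c+1) := None)) i (c+1)"
  | b where "X (i+1,c) = Some b"
      "step (Slide X i c) = Slide (X ((i,c) := Some b, (i+1,c) := None)) (i+1) c"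
proof (cases "X (i,c+1)")
  case None
  then show thesis using that(1,3) by (cases "X (i+1,c)") (auto simp: step.simps)
next
  case a: (Some a)
  show thesis
  proof (cases "X (i+1,c)")
    case None
    then show thesis using a that(2) by (simp add: step.simps)
  next
    case b: (Some b)
    then show thesis
      using a that(2,3) by (cases "a < b \<or> (a = b \<and> \<not> isB0 a)") (auto simp: step.simps)
  qed
qed

lemma slide_below_row1_step:
  assumes "2 \<le> i" and "row1 X = R"
  shows "row_run_inv R (step (Slide X i c))"
  by (cases rule: step_Slide_cases[of X i c]) (use assms in \<open>auto simp: row1_def\<close>)

lemma hole_in_row1_step:
  assumes hole: "hole_in_row1 X c R"
  shows "row_run_inv R (step (Slide X 1 c))"
proof -
  obtain d where d: "c \<le> d" "row1_filled X (Suc c) (Suc d)" "descent_at X d"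
    and R: "c \<in> R" "row1 X = R - {c}" using hole by (auto simp: hole_in_row1_def)
  obtain a b where ab: "X (2,d) = Some b" "X (1, Suc d) = Some a" "b < a" "\<not> isB0 a"
    using d(3) by (auto simp: descent_at_def)
  have right_filled: "X (1, c+1) \<noteq> None" using d(1,2) by (auto simp: row1_filled_def)
  show ?thesis
  proof (cases rule: step_Slide_cases[of X 1 c])
    case (2 x)
    have "c \<noteq> d"
    proof
      assume "c = d"
      then show False using 2(1,2) ab by (auto simp: numeral_2_eq_2)
    qed
    let ?X = "X ((1,c) := Some x, (1,c+1) := None)"
    have "hole_in_row1 ?X (c+1) R" unfolding hole_in_row1_def
    proof (intro conjI exI[of _ d])
      show "c + 1 \<in> R" "row1 ?X = R - {c+1}" using R 2(1) by (auto simp: row1_def)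
      show "row1_filled ?X (Suc (c+1)) (Suc d)" using d(2) by (auto simp: row1_filled_def)
      show "descent_at ?X d" using d(1,3) \<open>c \<noteq> d\<close> by (auto simp: descent_at_def)
    qed (use d(1) \<open>c \<noteq> d\<close> in simp)
    then show ?thesis using 2(3) by simp
  next
    case (3 y)
    have "row1 (X ((1,c) := Some y, (2,c) := None)) = R" using R by (auto simp: row1_def)
    then show ?thesis using 3(2) by (simp add: numeral_2_eq_2)
  qed (use right_filled in simp)
qed

lemma bar1_cancel_hole:
  assumes "bar1_before_descent X" and "X (1,j) = Some (Bar 1)"
  shows "hole_in_row1 (X ((1,j) := None)) j (row1 X)"
proof -
  obtain d where "j \<le> d" "row1_filled X j (Suc d)" "descent_at X d"
    using assms by (auto simp: bar1_before_descent_def)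
  then show ?thesis using assms(2) unfolding hole_in_row1_def
    by (intro conjI exI[of _ d]) (auto simp: row1_def row1_filled_def descent_at_def)
qed

lemma row_run_inv_displace:
  assumes "finite (dom X)" and "X (r,c) \<noteq> None" and "1 \<le> r \<or> \<not> isB0 w"
  shows "row_run_inv (row1 X) (displace (X ((r,c) := Some z)) w r c)"
  using assms row1_update_Some[of X r c z, OF assms(2)] by (auto simp: displace_def)

lemma row_run_inv_RowIns_step:
  assumes inv: "row_run_inv R (RowIns X z r)"
  shows "row_run_inv R (step (RowIns X z r))"
proof (cases "\<exists>c w. X (r,c) = Some w \<and> z < w")
  case True
  have fin: "finite (dom X)" and R: "row1 X = R" and r: "1 \<le> r" using inv by auto
  define c where "c = row_pos X z r"
  obtain w where w: "X (r,c) = Some w" using row_pos_spec[OF fin True] unfolding c_def by blast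
  have st: "step (RowIns X z r) = (if z = Ent r \<and> w = Bar r then Slide (X ((r,c) := None)) r c
      else displace (X ((r,c) := Some z)) w r c)"
    using step_RowIns_bump[OF True] w by (simp add: c_def[symmetric])
  show ?thesis
  proof (cases "z = Ent r \<and> w = Bar r")
    case cancel: True
    show ?thesis
    proof (cases "r = 1")
      case True
      then have "hole_in_row1 (X ((r,c) := None)) c R"
        using bar1_cancel_hole[of X c] inv w cancel R by auto
      then show ?thesis using st cancel True by simp
    next
      case False
      then show ?thesis using st cancel r R by (auto simp: row1_def)
    qed
  next
    case False
    have "step (RowIns X z r) = displace (X ((r,c) := Some z)) w r c"
      using st unfolding if_not_P[OF False] .
    then show ?thesis using row_run_inv_displace[of X r c w z] fin w r R by simp
  qed
qed (simp add: step_RowIns_append)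

lemma row_run_inv_ColIns_step:
  assumes inv: "row_run_inv R (ColIns X z c)"
  shows "row_run_inv R (step (ColIns X z c))"
proof (cases "\<exists>i w. X (i,c) = Some w \<and> z < w")
  case True
  have fin: "finite (dom X)" and R: "row1 X = R" and zB1: "\<not> isB0 z" using inv by auto
  define i where "i = col_pos X z c"
  obtain w where w: "X (i,c) = Some w" "z < w" using col_pos_spec[OF fin True] unfolding i_def by blast
  have "step (ColIns X z c) = displace (X ((i,c) := Some z)) w i c"
    using step_ColIns_bump[OF True] w by (simp add: i_def[symmetric])
  then show ?thesis
    using row_run_inv_displace[of X i c w z] fin w R greater_than_B1_is_B1[OF zB1 w(2)] by simp
qed (simp add: step_ColIns_append)

lemma row_run_inv_step: "row_run_inv R s \<Longrightarrow> row_run_inv R (step s)"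
proof (cases s)
  case (Slide X i c)
  moreover assume "row_run_inv R s"
  ultimately show ?thesis using slide_below_row1_step hole_in_row1_step by auto
qed (use row_run_inv_RowIns_step row_run_inv_ColIns_step in auto)

theorem mainTheorem5:
  fixes m n :: nat and T U V :: tab and x1 x2 :: entry and j :: nat
  assumes "spo_tableau m n T"
    and "inB1 n x1"
    and "col_insert T x1 U False"
    and "T (1,j) = None" and "dom U = insert (1,j) (dom T)"
    and "inB0 m x2"
    and "row_insert U x2 V True"
  shows "row_len V 1 = row_len U 1"
proof -
  have "bar1_before_descent U" using col_insert_bar1_before_descent[OF assms(1-5)] .
  moreover have "finite (dom U)" using assms(5) spo_young_dom[OF assms(1)] by (simp add: young_def)
  ultimately have "row_run_inv (row1 U) (RowIns U x2 1)" by simp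
  with assms(7) have "row_run_inv (row1 U) (Done V True)"
    unfolding row_insert_def by (rule runs_to_invariant) (rule row_run_inv_step)
  then show ?thesis by (simp add: row_len_def row1_def)
qed

end
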